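(* Let $V$ be a real vector space, let $F$ be a geometric mean closed vector lattice, let $T\colon V\times V\to F$ be a vector semi-inner product, and let $u\in F^+$. Define $\|x\|^T_u:=T(x,x)\boxtimes u$ for $x\in V$. Then for all $x,y\in V$, \[ \|x+y\|^T_u\boxplus\|x-y\|^T_u=2^{1/2}\bigl(\|x\|^T_u\boxplus\|y\|^T_u\bigr). \]
   Context: All vector spaces are over $\mathbb{R}$ and all vector lattices are Archimedean; $F^+=\{x\in F:x\ge0\}$. A vector lattice $F$ is geometric mean closed if $\inf\{\theta u+\theta^{-1}v:\theta\in(0,\infty)\}$ exists in $F$ for all $u,v\in F^+$, and then $u\boxtimes v:=2^{-1}\inf\{\theta u+\theta^{-1}v:\theta\in(0,\infty)\}$. For $u,v\in F$, $u\boxplus v:=\sup\{(\cos\theta)u+(\sin\theta)v:\theta\in[0,2\pi]\}$; this supremum exists in every geometric mean closed vector lattice. A map $T\colon V\times V\to F$ is a vector semi-inner product if it is bilinear, symmetric ($T(x,y)=T(y,x)$), and satisfies $T(x,x)\ge 0$ for all $x\in V$. *)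

theory Defs
  imports "HOL-Analysis.Analysis"
begin

class vector_lattice = ordered_real_vector + lattice

class archimedean_vector_lattice = vector_lattice +
  assumes archimedean: "0 \<le> x \<Longrightarrow> (\<And>n::nat. real n *\<^sub>R x \<le> y) \<Longrightarrow> x = 0"

definition is_infimum :: "'a::order set \<Rightarrow> 'a \<Rightarrow> bool" where
  "is_infimum S a \<longleftrightarrow> (\<forall>s\<in>S. a \<le> s) \<and> (\<forall>b. (\<forall>s\<in>S. b \<le> s) \<longrightarrow> b \<le> a)"

definition is_supremum :: "'a::order set \<Rightarrow> 'a \<Rightarrow> bool" where
  "is_supremum S a \<longleftrightarrow> (\<forall>s\<in>S. s \<le> a) \<and> (\<forall>b. (\<forall>s\<in>S. s \<le> b) \<longrightarrow> a \<le> b)"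

definition gm_set :: "'f::vector_lattice \<Rightarrow> 'f \<Rightarrow> 'f set" where
  "gm_set u v = {\<theta> *\<^sub>R u + inverse \<theta> *\<^sub>R v | \<theta>. 0 < \<theta>}"

definition geometric_mean_closed :: "'f::vector_lattice itself \<Rightarrow> bool" where
  "geometric_mean_closed _ \<longleftrightarrow>
     (\<forall>u v :: 'f. 0 \<le> u \<longrightarrow> 0 \<le> v \<longrightarrow> (\<exists>a. is_infimum (gm_set u v) a))"

definition gmean :: "'f::vector_lattice \<Rightarrow> 'f \<Rightarrow> 'f" (infixl "\<boxtimes>" 70) where
  "u \<boxtimes> v = inverse 2 *\<^sub>R (THE a. is_infimum (gm_set u v) a)"

definition rsq :: "'f::vector_lattice \<Rightarrow> 'f \<Rightarrow> 'f" (infixl "\<boxplus>" 65) where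
  "u \<boxplus> v = (THE a. is_supremum {cos \<theta> *\<^sub>R u + sin \<theta> *\<^sub>R v | \<theta>. 0 \<le> \<theta> \<and> \<theta> \<le> 2 * pi} a)"

definition vector_semi_inner_product :: "('v::real_vector \<Rightarrow> 'v \<Rightarrow> 'f::vector_lattice) \<Rightarrow> bool" where
  "vector_semi_inner_product T \<longleftrightarrow>
     (\<forall>y. linear (\<lambda>x. T x y)) \<and> (\<forall>x. linear (\<lambda>y. T x y)) \<and>
     (\<forall>x y. T x y = T y x) \<and> (\<forall>x. 0 \<le> T x x)"

definition vnorm :: "('v::real_vector \<Rightarrow> 'v \<Rightarrow> 'f::vector_lattice) \<Rightarrow> 'f \<Rightarrow> 'v \<Rightarrow> 'f" where
  "vnorm T u x = T x x \<boxtimes> u"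

end

theory Submission
  imports Defs "HOL-Library.Lattice_Algebras"
begin

text \<open>
  By the parallelogram law T (x + y) (x + y) + T (x - y) (x - y) = 2 (T x x + T y y), the theorem
  reduces to two properties of the geometric mean with a fixed u \<ge> 0: homogeneity,
  (2 a) \<boxtimes> u = sqrt 2 (a \<boxtimes> u), and (a \<boxtimes> u) \<boxplus> (b \<boxtimes> u) = (a + b) \<boxtimes> u, the lattice form of
  sqrt (a + b) = max (cos \<phi> sqrt a + sin \<phi> sqrt b).

  The bound cos \<phi> (a \<boxtimes> u) + sin \<phi> (b \<boxtimes> u) \<le> (a + b) \<boxtimes> u follows from homogeneity,
  superadditivity and monotonicity of \<boxtimes>. For the converse, a \<boxtimes> u is approximated from below:
  in an Archimedean vector lattice it is the least upper bound of the elements inf (k a) (u / k).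
  Splitting t = inf (k (a + b)) (u / k) as p + q with p \<le> k a and q \<le> k b (Riesz decomposition),
  each angle bounds the defect t - w by an absolute value |r t - p|, and a lattice version of the
  intermediate value theorem, together with the Archimedean property, makes the defect vanish.
\<close>

section \<open>Lattice-ordered groups and vector lattices\<close>

subclass (in lattice_ab_group_add) distrib_lattice
proof
  have inf_sup_le: "inf x (sup y z) \<le> sup (inf x y) (inf x z)" for x y z :: 'a
  proof -
    have inf_eq: "inf v w = v + w - sup v w" for v w :: 'a
      using add_eq_inf_sup[of v w] by (metis add_diff_cancel_left')
    define S where "S = sup x (sup y z)"
    have "inf x (sup y z) = sup (x + y - S) (x + z - S)"
      unfolding inf_eq S_def
      by (simp only: add_sup_distrib_left diff_conv_add_uminus add_sup_distrib_right)
    also have "\<dots> \<le> sup (x + y - sup x y) (x + z - sup x z)"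
      unfolding S_def by (intro sup_mono diff_left_mono) (auto intro: le_supI2)
    finally show ?thesis by (simp only: inf_eq)
  qed
  fix x y z :: 'a
  show "sup x (inf y z) = inf (sup x y) (sup x z)"
    by (rule distrib_imp1) (meson order.antisym inf_sup_le distrib_inf_le)
qed

subclass (in vector_lattice) lattice_ab_group_add ..

lemma inf_le_if_add_le_double:
  fixes x y \<delta> :: "'a::lattice_ab_group_add"
  assumes "x + y \<le> \<delta> + \<delta>"
  shows "inf x y \<le> \<delta>"
proof -
  have "inf x y + inf x y \<le> x + y" by (intro add_mono) simp_all
  with assms have "(inf x y - \<delta>) + (inf x y - \<delta>) \<le> 0" by (simp add: algebra_simps)
  then show ?thesis by simp
qed

lemma lattice_ivt_discrete:
  fixes g :: "nat \<Rightarrow> 'a::lattice_ab_group_add"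
  assumes step: "\<And>i. i < M \<Longrightarrow> g (Suc i) \<le> g i + (\<delta> + \<delta>)"
    and start: "g 0 \<le> \<delta>" and stop: "- \<delta> \<le> g M"
    and below: "\<And>i. i \<le> M \<Longrightarrow> d \<le> sup (g i) (- g i)"
  shows "d \<le> \<delta>"
proof -
  \<comment> \<open>The invariant survives a step because - g i and g (Suc i) cannot both exceed \<delta>.\<close>
  have "d \<le> sup \<delta> (- g i)" if "i \<le> M" for i
    using that
  proof (induction i)
    case 0
    have "d \<le> sup (g 0) (- g 0)" using below by simp
    also have "\<dots> \<le> sup \<delta> (- g 0)" using start by (rule sup_mono) simp
    finally show ?case .
  next
    case (Suc i)
    have cross: "inf (- g i) (g (Suc i)) \<le> \<delta>"
      using step[of i] Suc.prems by (intro inf_le_if_add_le_double) (simp add: algebra_simps)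
    have "d \<le> inf (sup \<delta> (- g i)) (sup (g (Suc i)) (- g (Suc i)))"
      using Suc below by simp
    also have "\<dots> \<le> sup \<delta> (- g (Suc i))"
      using cross by (auto simp: inf_sup_distrib1 inf_sup_distrib2 intro: le_infI1 le_infI2 le_supI1)
    finally show ?case .
  qed
  from this[of M] stop show ?thesis
    by (metis le_sup_iff minus_le_iff order_refl order_trans)
qed

lemma archimedean_nonpos:
  fixes x e :: "'a::archimedean_vector_lattice"
  assumes "\<And>n. 0 < n \<Longrightarrow> x \<le> inverse (real n) *\<^sub>R e"
  shows "x \<le> 0"
proof -
  have "sup x 0 = 0"
  proof (rule archimedean)
    fix n :: nat
    show "real n *\<^sub>R sup x 0 \<le> sup e 0"
    proof (cases "n = 0")
      case False
      have "inverse (real n) *\<^sub>R e \<le> inverse (real n) *\<^sub>R sup e 0"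
        by (rule scaleR_left_mono) simp_all
      with assms[of n] False have "x \<le> inverse (real n) *\<^sub>R sup e 0"
        by simp
      then have "sup x 0 \<le> inverse (real n) *\<^sub>R sup e 0"
        by (simp add: scaleR_nonneg_nonneg)
      then have "real n *\<^sub>R sup x 0 \<le> real n *\<^sub>R (inverse (real n) *\<^sub>R sup e 0)"
        by (rule scaleR_left_mono) simp
      with False show ?thesis by simp
    qed simp
  qed simp
  then show ?thesis by (metis sup.cobounded1)
qed

lemma lattice_ivt_grid:
  fixes g :: "real \<Rightarrow> 'a::vector_lattice"
  assumes "\<alpha> \<le> \<beta>" "0 \<le> \<delta>" "0 \<le> e" "0 < n"
    and start: "g \<alpha> \<le> \<delta>" and stop: "- \<delta> \<le> g \<beta>"
    and step: "\<And>r s. \<alpha> \<le> r \<Longrightarrow> r \<le> s \<Longrightarrow> s \<le> \<beta> \<Longrightarrow> g s \<le> g r + (s - r) *\<^sub>R e"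
    and below: "\<And>r. \<alpha> \<le> r \<Longrightarrow> r \<le> \<beta> \<Longrightarrow> d \<le> sup (g r) (- g r)"
  shows "d \<le> \<delta> + inverse (real n) *\<^sub>R (((\<beta> - \<alpha>) / 2) *\<^sub>R e)"
proof -
  define m where "m = (\<beta> - \<alpha>) / real n"
  define r where "r i = \<alpha> + real i * m" for i :: nat
  have "0 \<le> m" unfolding m_def using \<open>\<alpha> \<le> \<beta>\<close> by simp
  have r_range: "\<alpha> \<le> r i \<and> r i \<le> \<beta>" if "i \<le> n" for i
  proof -
    have "real i * m \<le> real n * m" using that \<open>0 \<le> m\<close> by (intro mult_right_mono) simp_all
    also have "\<dots> = \<beta> - \<alpha>" unfolding m_def using \<open>0 < n\<close> by simp
    finally show ?thesis unfolding r_def using \<open>0 \<le> m\<close> by simp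
  qed
  have "d \<le> \<delta> + (m / 2) *\<^sub>R e"
  proof (rule lattice_ivt_discrete[where g = "g \<circ> r" and M = n])
    fix i assume "i < n"
    have "g (r (Suc i)) \<le> g (r i) + m *\<^sub>R e"
      using step[of "r i" "r (Suc i)"] r_range[of i] r_range[of "Suc i"] \<open>i < n\<close> \<open>0 \<le> m\<close>
      by (simp add: r_def algebra_simps)
    also have "\<dots> \<le> g (r i) + ((\<delta> + (m / 2) *\<^sub>R e) + (\<delta> + (m / 2) *\<^sub>R e))"
      using \<open>0 \<le> \<delta>\<close> by (simp add: algebra_simps flip: scaleR_left_distrib)
    finally show "(g \<circ> r) (Suc i) \<le> (g \<circ> r) i + ((\<delta> + (m / 2) *\<^sub>R e) + (\<delta> + (m / 2) *\<^sub>R e))"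
      by simp
  next
    show "(g \<circ> r) 0 \<le> \<delta> + (m / 2) *\<^sub>R e"
      using start \<open>0 \<le> m\<close> \<open>0 \<le> e\<close> by (simp add: r_def add_increasing2 scaleR_nonneg_nonneg)
  next
    have "r n = \<beta>" unfolding r_def m_def using \<open>0 < n\<close> by simp
    then show "- (\<delta> + (m / 2) *\<^sub>R e) \<le> (g \<circ> r) n"
      using stop \<open>0 \<le> m\<close> \<open>0 \<le> e\<close> by (auto intro: order_trans[rotated] simp: scaleR_nonneg_nonneg)
  next
    show "d \<le> sup ((g \<circ> r) i) (- (g \<circ> r) i)" if "i \<le> n" for i
      using below r_range[OF that] by simp
  qed
  then show ?thesis unfolding m_def by (simp add: field_simps)
qed

lemma lattice_ivt:
  fixes g :: "real \<Rightarrow> 'a::archimedean_vector_lattice"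
  assumes "\<alpha> \<le> \<beta>" "0 \<le> \<delta>" "0 \<le> e"
    and "g \<alpha> \<le> \<delta>" "- \<delta> \<le> g \<beta>"
    and "\<And>r s. \<alpha> \<le> r \<Longrightarrow> r \<le> s \<Longrightarrow> s \<le> \<beta> \<Longrightarrow> g s \<le> g r + (s - r) *\<^sub>R e"
    and "\<And>r. \<alpha> \<le> r \<Longrightarrow> r \<le> \<beta> \<Longrightarrow> d \<le> sup (g r) (- g r)"
  shows "d \<le> \<delta>"
proof -
  have "d - \<delta> \<le> inverse (real n) *\<^sub>R (((\<beta> - \<alpha>) / 2) *\<^sub>R e)" if "0 < n" for n :: nat
  proof -
    have "d \<le> \<delta> + inverse (real n) *\<^sub>R (((\<beta> - \<alpha>) / 2) *\<^sub>R e)"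
      using assms that by (intro lattice_ivt_grid[of \<alpha> \<beta> \<delta> e n g d]) simp_all
    then show ?thesis by (subst diff_le_eq) (simp only: add.commute)
  qed
  then have "d - \<delta> \<le> 0" by (rule archimedean_nonpos)
  then show ?thesis by simp
qed

lemma midpoint_minus_inf:
  fixes x y :: "'a::vector_lattice"
  shows "(1/2) *\<^sub>R (x + y) - inf x y = sup ((1/2) *\<^sub>R (x - y)) (- ((1/2) *\<^sub>R (x - y)))"
proof -
  have "(1/2) *\<^sub>R (x + y) - inf x y = sup ((1/2) *\<^sub>R (x + y) - x) ((1/2) *\<^sub>R (x + y) - y)"
    by (subst diff_inf_eq_sup, subst add_sup_distrib_left, simp only: diff_conv_add_uminus)
  also have "(1/2) *\<^sub>R (x + y) - x = - ((1/2) *\<^sub>R (x - y))"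
    by (simp add: algebra_simps) (metis scaleR_half_double scaleR_add_right)
  also have "(1/2) *\<^sub>R (x + y) - y = (1/2) *\<^sub>R (x - y)"
    by (simp add: algebra_simps) (metis scaleR_half_double scaleR_add_right)
  finally show ?thesis by (simp only: sup_commute)
qed

lemma riesz_decomposition:
  fixes t x y :: "'a::lattice_ab_group_add"
  assumes "0 \<le> t" "t \<le> x + y" "0 \<le> x" "0 \<le> y"
  obtains p q where "t = p + q" "0 \<le> p" "p \<le> x" "0 \<le> q" "q \<le> y"
proof
  show "t = inf t x + (t - inf t x)" by (metis add.commute diff_add_cancel)
  show "0 \<le> inf t x" "inf t x \<le> x" using assms by simp_all
  show "0 \<le> t - inf t x" using inf_le1[of t x] by (simp only: diff_ge_0_iff_ge)
  have "t - inf t x = t + sup (- t) (- x)" by (rule diff_inf_eq_sup)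
  also have "\<dots> = sup 0 (t - x)" by (simp only: add_sup_distrib_left) simp
  also have "\<dots> \<le> y" using assms by (simp add: diff_le_eq add.commute)
  finally show "t - inf t x \<le> y" .
qed

lemma sup_zero_add_sup_zero_le:
  fixes z :: "'a::lattice_ab_group_add"
  shows "sup z 0 + sup (- z) 0 \<le> sup z (- z)"
proof -
  have "0 \<le> sup z (- z)"
    using add_mono[of z "sup z (- z)" "- z" "sup z (- z)"] by simp
  have "z + sup (- z) 0 = sup 0 z"
    by (simp add: add_sup_distrib_left sup_commute)
  then have "sup z 0 + sup (- z) 0 = sup (sup 0 z) (sup (- z) 0)"
    by (simp add: add_sup_distrib_right)
  also have "\<dots> \<le> sup z (- z)" using \<open>0 \<le> sup z (- z)\<close> by simp
  finally show ?thesis .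
qed

lemma inf_add_inf_ge:
  fixes p q x y :: "'a::lattice_ab_group_add"
  assumes "p + q = x + y"
  shows "x + y - sup (x - p) (- (x - p)) \<le> inf p x + inf q y"
proof -
  have "inf p x = x + inf (p - x) 0"
    by (simp add: add_inf_distrib_left)
  also have "inf (p - x) 0 = - sup (x - p) 0"
    unfolding inf_eq_neg_sup[of "p - x"] by simp
  finally have p: "inf p x = x - sup (x - p) 0" by simp
  have "q = y + (x - p)" using assms by (simp add: algebra_simps)
  then have "inf q y = y + inf (x - p) 0"
    by (simp add: add_inf_distrib_left)
  also have "inf (x - p) 0 = - sup (- (x - p)) 0"
    unfolding inf_eq_neg_sup[of "x - p"] by simp
  finally have q: "inf q y = y - sup (- (x - p)) 0" by simp
  have "x + y - sup (x - p) (- (x - p)) \<le> x + y - (sup (x - p) 0 + sup (- (x - p)) 0)"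
    by (rule diff_left_mono, rule sup_zero_add_sup_zero_le)
  also have "\<dots> = inf p x + inf q y"
    unfolding p q by (rule add_diff_add)
  finally show ?thesis .
qed

section \<open>The geometric mean\<close>

lemma is_infimum_unique:
  assumes "is_infimum S a" "is_infimum S b"
  shows "a = b"
  using assms unfolding is_infimum_def by (meson order.antisym)

lemma is_supremum_unique:
  assumes "is_supremum S a" "is_supremum S b"
  shows "a = b"
  using assms unfolding is_supremum_def by (meson order.antisym)

context
  fixes x y :: "'a::vector_lattice"
  assumes gmc: "geometric_mean_closed TYPE('a)" and x_nonneg: "0 \<le> x" and y_nonneg: "0 \<le> y"
begin

lemma gmean_is_infimum: "is_infimum (gm_set x y) (2 *\<^sub>R (x \<boxtimes> y))"
proof -
  obtain a where a: "is_infimum (gm_set x y) a"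
    using gmc x_nonneg y_nonneg unfolding geometric_mean_closed_def by blast
  then have "(THE a. is_infimum (gm_set x y) a) = a"
    using is_infimum_unique by blast
  with a show ?thesis by (simp add: gmean_def)
qed

lemma gmean_le: "0 < \<theta> \<Longrightarrow> 2 *\<^sub>R (x \<boxtimes> y) \<le> \<theta> *\<^sub>R x + inverse \<theta> *\<^sub>R y"
  using gmean_is_infimum unfolding is_infimum_def gm_set_def by blast

lemma gmean_greatest:
  assumes "\<And>\<theta>. 0 < \<theta> \<Longrightarrow> 2 *\<^sub>R z \<le> \<theta> *\<^sub>R x + inverse \<theta> *\<^sub>R y"
  shows "z \<le> x \<boxtimes> y"
proof -
  have "2 *\<^sub>R z \<le> 2 *\<^sub>R (x \<boxtimes> y)"
    using gmean_is_infimum assms unfolding is_infimum_def gm_set_def by blast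
  then show ?thesis by (simp add: scaleR_le_cancel_left_pos)
qed

lemma gmean_nonneg: "0 \<le> x \<boxtimes> y"
  by (rule gmean_greatest) (simp add: x_nonneg y_nonneg add_nonneg_nonneg scaleR_nonneg_nonneg)

end

lemma gmean_commute: "x \<boxtimes> y = y \<boxtimes> x"
proof -
  have "gm_set x y = gm_set y x"
    unfolding gm_set_def
    by (metis (no_types, opaque_lifting) add.commute inverse_inverse_eq inverse_positive_iff_positive)
  then show ?thesis by (simp add: gmean_def)
qed

lemma gmean_mono:
  fixes x y x' y' :: "'a::vector_lattice"
  assumes gmc: "geometric_mean_closed TYPE('a)"
    and "0 \<le> x" "x \<le> x'" "0 \<le> y" "y \<le> y'"
  shows "x \<boxtimes> y \<le> x' \<boxtimes> y'"
proof (rule gmean_greatest)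
  fix \<theta> :: real assume "0 < \<theta>"
  then have "2 *\<^sub>R (x \<boxtimes> y) \<le> \<theta> *\<^sub>R x + inverse \<theta> *\<^sub>R y"
    using assms by (intro gmean_le) simp_all
  also have "\<dots> \<le> \<theta> *\<^sub>R x' + inverse \<theta> *\<^sub>R y'"
    using assms \<open>0 < \<theta>\<close> by (intro add_mono scaleR_left_mono) simp_all
  finally show "2 *\<^sub>R (x \<boxtimes> y) \<le> \<theta> *\<^sub>R x' + inverse \<theta> *\<^sub>R y'" .
qed (use assms in auto)

lemma gmean_superadditive:
  fixes x y x' y' :: "'a::vector_lattice"
  assumes gmc: "geometric_mean_closed TYPE('a)"
    and "0 \<le> x" "0 \<le> y" "0 \<le> x'" "0 \<le> y'"
  shows "x \<boxtimes> y + x' \<boxtimes> y' \<le> (x + x') \<boxtimes> (y + y')"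
proof (rule gmean_greatest)
  fix \<theta> :: real assume "0 < \<theta>"
  have "2 *\<^sub>R (x \<boxtimes> y + x' \<boxtimes> y') = 2 *\<^sub>R (x \<boxtimes> y) + 2 *\<^sub>R (x' \<boxtimes> y')"
    by (rule scaleR_add_right)
  also have "\<dots> \<le> (\<theta> *\<^sub>R x + inverse \<theta> *\<^sub>R y) + (\<theta> *\<^sub>R x' + inverse \<theta> *\<^sub>R y')"
    using assms \<open>0 < \<theta>\<close> by (intro add_mono gmean_le)
  also have "\<dots> = \<theta> *\<^sub>R (x + x') + inverse \<theta> *\<^sub>R (y + y')"
    by (simp add: algebra_simps)
  finally show "2 *\<^sub>R (x \<boxtimes> y + x' \<boxtimes> y') \<le> \<theta> *\<^sub>R (x + x') + inverse \<theta> *\<^sub>R (y + y')" .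
qed (use assms in auto)

lemma scaleR_gmean_le:
  fixes x y :: "'a::vector_lattice"
  assumes gmc: "geometric_mean_closed TYPE('a)" and "0 \<le> x" "0 \<le> y" "0 \<le> c"
  shows "c *\<^sub>R (x \<boxtimes> y) \<le> x \<boxtimes> (c\<^sup>2 *\<^sub>R y)"
proof (rule gmean_greatest)
  fix \<theta> :: real assume "0 < \<theta>"
  show "2 *\<^sub>R (c *\<^sub>R (x \<boxtimes> y)) \<le> \<theta> *\<^sub>R x + inverse \<theta> *\<^sub>R (c\<^sup>2 *\<^sub>R y)"
  proof (cases "c = 0")
    case True
    then show ?thesis using assms \<open>0 < \<theta>\<close> by (simp add: scaleR_nonneg_nonneg)
  next
    case False
    with \<open>0 \<le> c\<close> have "0 < c" by simp
    have "2 *\<^sub>R (c *\<^sub>R (x \<boxtimes> y)) = c *\<^sub>R (2 *\<^sub>R (x \<boxtimes> y))" by simp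
    also have "\<dots> \<le> c *\<^sub>R ((\<theta> / c) *\<^sub>R x + inverse (\<theta> / c) *\<^sub>R y)"
      using assms \<open>0 < \<theta>\<close> \<open>0 < c\<close> by (intro scaleR_left_mono gmean_le) simp_all
    also have "\<dots> = \<theta> *\<^sub>R x + inverse \<theta> *\<^sub>R (c\<^sup>2 *\<^sub>R y)"
      using \<open>0 < c\<close> by (simp add: scaleR_add_right power2_eq_square field_simps)
    finally show ?thesis .
  qed
qed (use assms in \<open>auto simp: scaleR_nonneg_nonneg\<close>)

lemma gmean_scaleR_left:
  fixes x y :: "'a::vector_lattice"
  assumes gmc: "geometric_mean_closed TYPE('a)" and "0 \<le> x" "0 \<le> y" "0 < c"
  shows "(c *\<^sub>R x) \<boxtimes> y = sqrt c *\<^sub>R (x \<boxtimes> y)"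
proof -
  define s where "s = sqrt c"
  have "0 < s" "s\<^sup>2 = c" using \<open>0 < c\<close> by (simp_all add: s_def)
  have "(c *\<^sub>R x) \<boxtimes> y = y \<boxtimes> (s\<^sup>2 *\<^sub>R x)" using \<open>s\<^sup>2 = c\<close> by (simp add: gmean_commute)
  moreover have "s *\<^sub>R (y \<boxtimes> x) \<le> y \<boxtimes> (s\<^sup>2 *\<^sub>R x)"
    using assms \<open>0 < s\<close> by (intro scaleR_gmean_le) simp_all
  moreover have "y \<boxtimes> (s\<^sup>2 *\<^sub>R x) \<le> s *\<^sub>R (y \<boxtimes> x)"
  proof -
    have "inverse s *\<^sub>R (y \<boxtimes> (s\<^sup>2 *\<^sub>R x)) \<le> y \<boxtimes> ((inverse s)\<^sup>2 *\<^sub>R (s\<^sup>2 *\<^sub>R x))"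
      using assms \<open>0 < s\<close> by (intro scaleR_gmean_le) (simp_all add: scaleR_nonneg_nonneg)
    also have "(inverse s)\<^sup>2 *\<^sub>R (s\<^sup>2 *\<^sub>R x) = x"
      using \<open>0 < s\<close> by (simp add: field_simps)
    finally show ?thesis
      using \<open>0 < s\<close> by (simp add: pos_divideR_le_eq)
  qed
  ultimately show ?thesis by (simp add: s_def gmean_commute order.antisym)
qed

lemma inf_scaleR_le_gmean:
  fixes a u :: "'a::vector_lattice"
  assumes gmc: "geometric_mean_closed TYPE('a)" and "0 \<le> a" "0 \<le> u" "0 < k"
  shows "inf (k *\<^sub>R a) (inverse k *\<^sub>R u) \<le> a \<boxtimes> u"
proof (rule gmean_greatest)
  fix \<theta> :: real assume "0 < \<theta>"
  define z where "z = inf (k *\<^sub>R a) (inverse k *\<^sub>R u)"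
  have "0 \<le> z" using assms unfolding z_def by (simp add: scaleR_nonneg_nonneg)
  have "2 \<le> \<theta> / k + k / \<theta>"
  proof -
    have "2 * \<theta> * k \<le> \<theta>\<^sup>2 + k\<^sup>2" using sum_squares_bound[of \<theta> k] by simp
    with \<open>0 < \<theta>\<close> \<open>0 < k\<close> show ?thesis by (simp add: field_simps power2_eq_square)
  qed
  then have "2 *\<^sub>R z \<le> (\<theta> / k) *\<^sub>R z + (k / \<theta>) *\<^sub>R z"
    using \<open>0 \<le> z\<close> by (simp add: scaleR_right_mono flip: scaleR_add_left)
  also have "\<dots> \<le> (\<theta> / k) *\<^sub>R (k *\<^sub>R a) + (k / \<theta>) *\<^sub>R (inverse k *\<^sub>R u)"
    using \<open>0 < \<theta>\<close> \<open>0 < k\<close> unfolding z_def by (intro add_mono scaleR_left_mono) simp_all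
  also have "\<dots> = \<theta> *\<^sub>R a + inverse \<theta> *\<^sub>R u"
    using \<open>0 < k\<close> by (simp add: field_simps)
  finally show "2 *\<^sub>R z \<le> \<theta> *\<^sub>R a + inverse \<theta> *\<^sub>R u" .
qed (use assms in auto)

lemma gmean_minus_inf_scaleR_le:
  fixes a u :: "'a::vector_lattice"
  assumes gmc: "geometric_mean_closed TYPE('a)" and "0 \<le> a" "0 \<le> u" "0 < \<theta>"
  defines "h \<equiv> (1/2) *\<^sub>R (\<theta> *\<^sub>R a - inverse \<theta> *\<^sub>R u)"
  shows "a \<boxtimes> u - inf (\<theta> *\<^sub>R a) (inverse \<theta> *\<^sub>R u) \<le> sup h (- h)"
proof -
  have "(1/2::real) *\<^sub>R (2 *\<^sub>R (a \<boxtimes> u)) \<le> (1/2) *\<^sub>R (\<theta> *\<^sub>R a + inverse \<theta> *\<^sub>R u)"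
    using assms by (intro scaleR_left_mono gmean_le) simp_all
  then have "a \<boxtimes> u - inf (\<theta> *\<^sub>R a) (inverse \<theta> *\<^sub>R u)
      \<le> (1/2) *\<^sub>R (\<theta> *\<^sub>R a + inverse \<theta> *\<^sub>R u) - inf (\<theta> *\<^sub>R a) (inverse \<theta> *\<^sub>R u)"
    by (intro diff_right_mono) simp
  also have "\<dots> = sup h (- h)"
    unfolding h_def by (rule midpoint_minus_inf)
  finally show ?thesis .
qed

lemma inverse_diff_le_mult_square:
  fixes c r s :: real
  assumes "0 < c" "inverse c \<le> r" "r \<le> s"
  shows "inverse r - inverse s \<le> (s - r) * c\<^sup>2"
proof -
  have "0 < r" using assms by (meson inverse_positive_iff_positive order_less_le_trans)
  have "inverse r \<le> c" "inverse s \<le> c"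
    using assms \<open>0 < r\<close>
    by (metis inverse_inverse_eq inverse_le_imp_le order.trans inverse_positive_iff_positive)+
  have "inverse r - inverse s = (s - r) * (inverse r * inverse s)"
    using \<open>0 < r\<close> \<open>r \<le> s\<close> by (simp add: field_simps)
  also have "\<dots> \<le> (s - r) * c\<^sup>2"
    using \<open>r \<le> s\<close> \<open>0 < r\<close> \<open>inverse r \<le> c\<close> \<open>inverse s \<le> c\<close> \<open>0 < c\<close>
    by (intro mult_left_mono) (auto simp: power2_eq_square intro!: mult_mono)
  finally show ?thesis .
qed

lemma gmean_le_if_inf_scaleR_le:
  fixes a u z :: "'a::archimedean_vector_lattice"
  assumes gmc: "geometric_mean_closed TYPE('a)" and "0 \<le> a" "0 \<le> u"
    and inf_le: "\<And>k. 0 < k \<Longrightarrow> inf (k *\<^sub>R a) (inverse k *\<^sub>R u) \<le> z"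
  shows "a \<boxtimes> u \<le> z"
proof -
  define h where "h \<theta> = (1/2) *\<^sub>R (\<theta> *\<^sub>R a - inverse \<theta> *\<^sub>R u)" for \<theta>
  \<comment> \<open>On [1/N, N] the path h runs from almost nonpositive to almost nonnegative at bounded speed.\<close>
  have "a \<boxtimes> u - z \<le> inverse (real N) *\<^sub>R ((1/2) *\<^sub>R (a + u))" if "0 < N" for N :: nat
  proof (rule lattice_ivt[where g = h and \<alpha> = "inverse (real N)" and \<beta> = "real N"
        and e = "(1/2) *\<^sub>R (a + (real N)\<^sup>2 *\<^sub>R u)"])
    have "1 \<le> real N" using that by simp
    then show "inverse (real N) \<le> real N"
      by (meson inverse_le_1_iff order_trans less_imp_le not_one_le_zero)
    show "0 \<le> inverse (real N) *\<^sub>R ((1/2) *\<^sub>R (a + u))" "0 \<le> (1/2) *\<^sub>R (a + (real N)\<^sup>2 *\<^sub>R u)"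
      using assms by (simp_all add: scaleR_nonneg_nonneg add_nonneg_nonneg)
    have "- (real N *\<^sub>R u) \<le> inverse (real N) *\<^sub>R u"
      by (rule order_trans[of _ 0]) (use assms in \<open>simp_all add: scaleR_nonneg_nonneg\<close>)
    then have "h (inverse (real N)) \<le> (1/2) *\<^sub>R (inverse (real N) *\<^sub>R (a + u))"
      unfolding h_def by (intro scaleR_left_mono) (simp_all add: scaleR_add_right)
    then show "h (inverse (real N)) \<le> inverse (real N) *\<^sub>R ((1/2) *\<^sub>R (a + u))"
      by simp
    have "- (inverse (real N) *\<^sub>R a) \<le> real N *\<^sub>R a"
      by (rule order_trans[of _ 0]) (use assms in \<open>simp_all add: scaleR_nonneg_nonneg\<close>)
    then have "(1/2) *\<^sub>R (- (inverse (real N) *\<^sub>R (a + u))) \<le> h (real N)"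
      unfolding h_def by (intro scaleR_left_mono) (simp_all add: scaleR_add_right)
    then show "- (inverse (real N) *\<^sub>R ((1/2) *\<^sub>R (a + u))) \<le> h (real N)"
      by simp
  next
    fix r s :: real
    assume "inverse (real N) \<le> r" "r \<le> s" "s \<le> real N"
    then have "inverse r - inverse s \<le> (s - r) * (real N)\<^sup>2"
      using \<open>0 < N\<close> by (intro inverse_diff_le_mult_square) simp_all
    have "h s = h r + (1/2) *\<^sub>R ((s - r) *\<^sub>R a + (inverse r - inverse s) *\<^sub>R u)"
      unfolding h_def by (simp add: algebra_simps)
    also have "\<dots> \<le> h r + (1/2) *\<^sub>R ((s - r) *\<^sub>R a + ((s - r) * (real N)\<^sup>2) *\<^sub>R u)"
      using \<open>inverse r - inverse s \<le> (s - r) * (real N)\<^sup>2\<close> assms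
      by (intro add_left_mono scaleR_left_mono scaleR_right_mono) simp_all
    also have "\<dots> = h r + (s - r) *\<^sub>R ((1/2) *\<^sub>R (a + (real N)\<^sup>2 *\<^sub>R u))"
      by (simp add: scaleR_add_right ac_simps)
    finally show "h s \<le> h r + (s - r) *\<^sub>R ((1/2) *\<^sub>R (a + (real N)\<^sup>2 *\<^sub>R u))" .
  next
    fix r assume "inverse (real N) \<le> r"
    with \<open>0 < N\<close> have "0 < r"
      by (meson inverse_positive_iff_positive of_nat_0_less_iff order_less_le_trans)
    have "a \<boxtimes> u - z \<le> a \<boxtimes> u - inf (r *\<^sub>R a) (inverse r *\<^sub>R u)"
      using inf_le[OF \<open>0 < r\<close>] by (rule diff_left_mono)
    also have "\<dots> \<le> sup (h r) (- h r)"
      unfolding h_def using gmc \<open>0 \<le> a\<close> \<open>0 \<le> u\<close> \<open>0 < r\<close> by (rule gmean_minus_inf_scaleR_le)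
    finally show "a \<boxtimes> u - z \<le> sup (h r) (- h r)" .
  qed
  then have "a \<boxtimes> u - z \<le> 0" by (rule archimedean_nonpos)
  then show ?thesis by simp
qed

section \<open>Root sums of squares of geometric means\<close>

lemma cos_sin_gmean_le_gmean_add:
  fixes a b u :: "'a::vector_lattice"
  assumes gmc: "geometric_mean_closed TYPE('a)" and "0 \<le> a" "0 \<le> b" "0 \<le> u"
  shows "cos \<phi> *\<^sub>R (a \<boxtimes> u) + sin \<phi> *\<^sub>R (b \<boxtimes> u) \<le> (a + b) \<boxtimes> u"
proof -
  define c s where "c = max (cos \<phi>) 0" and "s = max (sin \<phi>) 0"
  have "0 \<le> c" "0 \<le> s" unfolding c_def s_def by simp_all
  have "c\<^sup>2 \<le> (cos \<phi>)\<^sup>2" "s\<^sup>2 \<le> (sin \<phi>)\<^sup>2"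
    unfolding c_def s_def by (simp_all add: max_def power2_eq_square)
  then have "c\<^sup>2 + s\<^sup>2 \<le> 1" using sin_cos_squared_add[of \<phi>] by linarith
  have "cos \<phi> *\<^sub>R (a \<boxtimes> u) + sin \<phi> *\<^sub>R (b \<boxtimes> u) \<le> c *\<^sub>R (a \<boxtimes> u) + s *\<^sub>R (b \<boxtimes> u)"
    using assms unfolding c_def s_def by (intro add_mono scaleR_right_mono gmean_nonneg) simp_all
  also have "\<dots> \<le> a \<boxtimes> (c\<^sup>2 *\<^sub>R u) + b \<boxtimes> (s\<^sup>2 *\<^sub>R u)"
    using assms \<open>0 \<le> c\<close> \<open>0 \<le> s\<close> by (intro add_mono scaleR_gmean_le)
  also have "\<dots> \<le> (a + b) \<boxtimes> (c\<^sup>2 *\<^sub>R u + s\<^sup>2 *\<^sub>R u)"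
    using assms by (intro gmean_superadditive) (simp_all add: scaleR_nonneg_nonneg)
  also have "\<dots> \<le> (a + b) \<boxtimes> u"
  proof (rule gmean_mono)
    show "c\<^sup>2 *\<^sub>R u + s\<^sup>2 *\<^sub>R u \<le> u"
      using \<open>c\<^sup>2 + s\<^sup>2 \<le> 1\<close> \<open>0 \<le> u\<close> scaleR_right_mono[of "c\<^sup>2 + s\<^sup>2" 1 u]
      by (simp add: scaleR_add_left)
  qed (use assms in \<open>simp_all add: scaleR_nonneg_nonneg add_nonneg_nonneg\<close>)
  finally show ?thesis .
qed

lemma inf_le_sqrt_scaleR_gmean:
  fixes a u p t :: "'a::vector_lattice"
  assumes gmc: "geometric_mean_closed TYPE('a)" and "0 \<le> a" "0 \<le> u"
    and "0 < k" "0 \<le> r" "p \<le> k *\<^sub>R a" "t \<le> inverse k *\<^sub>R u"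
  shows "inf p (r *\<^sub>R t) \<le> sqrt r *\<^sub>R (a \<boxtimes> u)"
proof (cases "r = 0")
  case True
  then show ?thesis by simp
next
  case False
  with \<open>0 \<le> r\<close> have "0 < r" by simp
  have "r *\<^sub>R t \<le> inverse k *\<^sub>R (r *\<^sub>R u)"
    using scaleR_left_mono[OF \<open>t \<le> inverse k *\<^sub>R u\<close> \<open>0 \<le> r\<close>] by (simp add: mult.commute)
  with assms have "inf p (r *\<^sub>R t) \<le> inf (k *\<^sub>R a) (inverse k *\<^sub>R (r *\<^sub>R u))"
    by (intro inf_mono)
  also have "\<dots> \<le> a \<boxtimes> (r *\<^sub>R u)"
    using assms by (intro inf_scaleR_le_gmean) (simp_all add: scaleR_nonneg_nonneg)
  also have "\<dots> = sqrt r *\<^sub>R (a \<boxtimes> u)"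
    using assms \<open>0 < r\<close> by (simp add: gmean_commute[of a] gmean_scaleR_left)
  finally show ?thesis .
qed

lemma gmean_add_le_if_cos_sin_le:
  fixes a b u w :: "'a::archimedean_vector_lattice"
  assumes gmc: "geometric_mean_closed TYPE('a)" and "0 \<le> a" "0 \<le> b" "0 \<le> u"
    and bound: "\<And>\<phi>. 0 \<le> \<phi> \<Longrightarrow> \<phi> \<le> 2 * pi \<Longrightarrow> cos \<phi> *\<^sub>R (a \<boxtimes> u) + sin \<phi> *\<^sub>R (b \<boxtimes> u) \<le> w"
  shows "(a + b) \<boxtimes> u \<le> w"
proof (rule gmean_le_if_inf_scaleR_le)
  fix k :: real assume "0 < k"
  define t where "t = inf (k *\<^sub>R (a + b)) (inverse k *\<^sub>R u)"
  have "0 \<le> t" "t \<le> k *\<^sub>R a + k *\<^sub>R b" "t \<le> inverse k *\<^sub>R u"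
    using assms \<open>0 < k\<close> unfolding t_def
    by (simp_all add: scaleR_nonneg_nonneg add_nonneg_nonneg scaleR_add_right)
  moreover have "0 \<le> k *\<^sub>R a" "0 \<le> k *\<^sub>R b"
    using assms \<open>0 < k\<close> by (simp_all add: scaleR_nonneg_nonneg)
  ultimately obtain p q where pq: "t = p + q" "0 \<le> p" "p \<le> k *\<^sub>R a" "0 \<le> q" "q \<le> k *\<^sub>R b"
    by (metis riesz_decomposition)
  \<comment> \<open>The angle with cos \<phi> = sqrt r controls inf p (r t) + inf q ((1 - r) t); the path r t - p
    then runs from - p \<le> 0 to q \<ge> 0.\<close>
  have gap: "t - w \<le> sup (r *\<^sub>R t - p) (- (r *\<^sub>R t - p))" if "0 \<le> r" "r \<le> 1" for r
  proof -
    define \<phi> where "\<phi> = arccos (sqrt r)"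
    have "0 \<le> sqrt r" "sqrt r \<le> 1" using that by simp_all
    then have "- 1 \<le> sqrt r" "sqrt r \<le> 1" by linarith+
    then have "0 \<le> \<phi>" "\<phi> \<le> pi" "cos \<phi> = sqrt r" "sin \<phi> = sqrt (1 - r)"
      using arccos_bounded[of "sqrt r"] sin_arccos[of "sqrt r"] \<open>0 \<le> r\<close> by (simp_all add: \<phi>_def)
    then have "\<phi> \<le> 2 * pi" using pi_gt_zero by linarith
    have "inf p (r *\<^sub>R t) + inf q ((1 - r) *\<^sub>R t) \<le> sqrt r *\<^sub>R (a \<boxtimes> u) + sqrt (1 - r) *\<^sub>R (b \<boxtimes> u)"
      using assms pq \<open>0 < k\<close> that \<open>t \<le> inverse k *\<^sub>R u\<close>
      by (intro add_mono inf_le_sqrt_scaleR_gmean) simp_all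
    also have "\<dots> \<le> w"
      using bound[OF \<open>0 \<le> \<phi>\<close> \<open>\<phi> \<le> 2 * pi\<close>] \<open>cos \<phi> = sqrt r\<close> \<open>sin \<phi> = sqrt (1 - r)\<close> by simp
    finally have inf_sum_le: "inf p (r *\<^sub>R t) + inf q ((1 - r) *\<^sub>R t) \<le> w" .
    have "r *\<^sub>R t + (1 - r) *\<^sub>R t = t" by (simp add: scaleR_diff_left)
    then have "t - sup (r *\<^sub>R t - p) (- (r *\<^sub>R t - p)) \<le> inf p (r *\<^sub>R t) + inf q ((1 - r) *\<^sub>R t)"
      using inf_add_inf_ge[of p q "r *\<^sub>R t" "(1 - r) *\<^sub>R t"] pq(1) by simp
    then have "t - sup (r *\<^sub>R t - p) (- (r *\<^sub>R t - p)) \<le> w"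
      using inf_sum_le by (rule order_trans)
    then show ?thesis by (subst diff_le_eq, subst (asm) diff_le_eq) (simp only: add.commute)
  qed
  have "t - w \<le> 0"
  proof (rule lattice_ivt[where g = "\<lambda>r. r *\<^sub>R t - p" and \<alpha> = 0 and \<beta> = 1 and e = t])
    show "s *\<^sub>R t - p \<le> r *\<^sub>R t - p + (s - r) *\<^sub>R t" for r s
      by (simp add: algebra_simps)
  qed (use gap pq \<open>0 \<le> t\<close> in simp_all)
  then show "inf (k *\<^sub>R (a + b)) (inverse k *\<^sub>R u) \<le> w" by (simp add: t_def)
qed (use assms in simp_all)

lemma rsq_gmean_eq_gmean_add:
  fixes a b u :: "'a::archimedean_vector_lattice"
  assumes gmc: "geometric_mean_closed TYPE('a)" and "0 \<le> a" "0 \<le> b" "0 \<le> u"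
  shows "(a \<boxtimes> u) \<boxplus> (b \<boxtimes> u) = (a + b) \<boxtimes> u"
proof -
  let ?S = "{cos \<theta> *\<^sub>R (a \<boxtimes> u) + sin \<theta> *\<^sub>R (b \<boxtimes> u) | \<theta>. 0 \<le> \<theta> \<and> \<theta> \<le> 2 * pi}"
  have "is_supremum ?S ((a + b) \<boxtimes> u)"
    using cos_sin_gmean_le_gmean_add[OF assms] gmean_add_le_if_cos_sin_le[OF assms]
    unfolding is_supremum_def by blast
  then show ?thesis
    unfolding rsq_def using is_supremum_unique by blast
qed

lemma vector_semi_inner_product_parallelogram:
  assumes "vector_semi_inner_product T"
  shows "T (x + y) (x + y) + T (x - y) (x - y) = 2 *\<^sub>R (T x x + T y y)"
proof -
  have left: "linear (\<lambda>x. T x z)" and right: "linear (\<lambda>y. T z y)" and symmetric: "T x y = T y x"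
    for x y z
    using assms unfolding vector_semi_inner_product_def by blast+
  have "T (v + w) z = T v z + T w z" "T (v - w) z = T v z - T w z"
    "T z (v + w) = T z v + T z w" "T z (v - w) = T z v - T z w" for v w z
    using linear_add[OF left] linear_add[OF right] linear_diff[OF left] linear_diff[OF right]
    by simp_all
  then have "T (x + y) (x + y) = T x x + T y x + (T x y + T y y)"
    "T (x - y) (x - y) = T x x - T y x - (T x y - T y y)"
    by (simp only:)+
  with symmetric[of y x] show ?thesis by (simp add: scaleR_2 algebra_simps)
qed

theorem theorem3p8:
  fixes T :: "'v::real_vector \<Rightarrow> 'v \<Rightarrow> 'f::archimedean_vector_lattice"
    and u :: 'f
  assumes "geometric_mean_closed TYPE('f)"
    and "vector_semi_inner_product T"
    and "0 \<le> u"
  shows "\<forall>x y. vnorm T u (x + y) \<boxplus> vnorm T u (x - y)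
               = sqrt 2 *\<^sub>R (vnorm T u x \<boxplus> vnorm T u y)"
proof (intro allI)
  fix x y :: 'v
  have T_nonneg: "0 \<le> T v v" for v
    using assms(2) unfolding vector_semi_inner_product_def by blast
  have "vnorm T u (x + y) \<boxplus> vnorm T u (x - y) = (T (x + y) (x + y) + T (x - y) (x - y)) \<boxtimes> u"
    unfolding vnorm_def using assms T_nonneg by (intro rsq_gmean_eq_gmean_add)
  also have "\<dots> = (2 *\<^sub>R (T x x + T y y)) \<boxtimes> u"
    using assms(2) by (simp only: vector_semi_inner_product_parallelogram)
  also have "\<dots> = sqrt 2 *\<^sub>R ((T x x + T y y) \<boxtimes> u)"
    using assms T_nonneg by (intro gmean_scaleR_left add_nonneg_nonneg) simp_all
  also have "(T x x + T y y) \<boxtimes> u = vnorm T u x \<boxplus> vnorm T u y"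
    unfolding vnorm_def using assms T_nonneg by (intro rsq_gmean_eq_gmean_add [symmetric])
  finally show "vnorm T u (x + y) \<boxplus> vnorm T u (x - y) = sqrt 2 *\<^sub>R (vnorm T u x \<boxplus> vnorm T u y)" .
qed

end
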